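(* Let $X$ be a shift space and $\varphi$ a flip for $(X,\sigma_X)$. Then there are a finite set $\mathcal{A}$, a map $\Phi:\mathcal{A}\to\mathcal{B}_1(X)$, a shift space $Y$ over $\mathcal{A}$ and a one-block flip $\psi$ for $(Y,\sigma_Y)$ such that $\Phi_\infty$ is a conjugacy from $(Y,\sigma_Y,\psi)$ to $(X,\sigma_X,\varphi)$.
   Context: For a shift space $X$, $\sigma_X$ is the shift map and $\mathcal{B}_1(X)$ the set of symbols occurring in $X$. A flip for $(X,\sigma_X)$ is a homeomorphism $\varphi:X\to X$ with $\varphi\sigma_X=\sigma_X^{-1}\varphi$ and $\varphi^2=\mathrm{id}_X$. A flip $\psi$ for $(Y,\sigma_Y)$ is one-block if $y,y'\in Y$, $y_0=y'_0$ imply $\psi(y)_0=\psi(y')_0$ (equivalently, $\psi(y)_i=\tau(y_{-i})$ for some $\tau$ with $\tau^2=\mathrm{id}$). $\Phi_\infty$ denotes the one-block code $\Phi_\infty(y)_i=\Phi(y_i)$. A conjugacy from $(Y,\sigma_Y,\psi)$ to $(X,\sigma_X,\varphi)$ is a homeomorphism $\theta:Y\to X$ with $\theta\circ\sigma_Y=\sigma_X\circ\theta$ and $\theta\circ\psi=\varphi\circ\theta$. *)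

theory Defs
  imports "HOL-Analysis.Analysis"
begin

definition full_shift_top :: "'a set \<Rightarrow> (int \<Rightarrow> 'a) topology" where
  "full_shift_top A = product_topology (\<lambda>_::int. discrete_topology A) UNIV"

definition shift :: "(int \<Rightarrow> 'a) \<Rightarrow> (int \<Rightarrow> 'a)" where
  "shift x = (\<lambda>i. x (i + 1))"

definition shift_inv :: "(int \<Rightarrow> 'a) \<Rightarrow> (int \<Rightarrow> 'a)" where
  "shift_inv x = (\<lambda>i. x (i - 1))"

definition shift_space :: "'a set \<Rightarrow> (int \<Rightarrow> 'a) set \<Rightarrow> bool" where
  "shift_space A X \<longleftrightarrow> finite A \<and> X \<subseteq> topspace (full_shift_top A)
     \<and> closedin (full_shift_top A) X \<and> shift ` X = X"

definition B1 :: "(int \<Rightarrow> 'a) set \<Rightarrow> 'a set" where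
  "B1 X = {x i | x i. x \<in> X}"

definition shift_top :: "'a set \<Rightarrow> (int \<Rightarrow> 'a) set \<Rightarrow> (int \<Rightarrow> 'a) topology" where
  "shift_top A X = subtopology (full_shift_top A) X"

definition is_flip :: "'a set \<Rightarrow> (int \<Rightarrow> 'a) set \<Rightarrow> ((int \<Rightarrow> 'a) \<Rightarrow> (int \<Rightarrow> 'a)) \<Rightarrow> bool" where
  "is_flip A X \<phi> \<longleftrightarrow> homeomorphic_map (shift_top A X) (shift_top A X) \<phi>
     \<and> (\<forall>x\<in>X. \<phi> (shift x) = shift_inv (\<phi> x))
     \<and> (\<forall>x\<in>X. \<phi> (\<phi> x) = x)"

definition one_block_flip :: "'a set \<Rightarrow> (int \<Rightarrow> 'a) set \<Rightarrow> ((int \<Rightarrow> 'a) \<Rightarrow> (int \<Rightarrow> 'a)) \<Rightarrow> bool" where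
  "one_block_flip A Y \<psi> \<longleftrightarrow> is_flip A Y \<psi>
     \<and> (\<forall>y\<in>Y. \<forall>y'\<in>Y. y 0 = y' 0 \<longrightarrow> \<psi> y 0 = \<psi> y' 0)"

definition block_code :: "('b \<Rightarrow> 'a) \<Rightarrow> (int \<Rightarrow> 'b) \<Rightarrow> (int \<Rightarrow> 'a)" where
  "block_code \<Phi> y = (\<lambda>i. \<Phi> (y i))"

definition flip_conjugacy ::
  "'b set \<Rightarrow> (int \<Rightarrow> 'b) set \<Rightarrow> ((int \<Rightarrow> 'b) \<Rightarrow> (int \<Rightarrow> 'b)) \<Rightarrow>
   'a set \<Rightarrow> (int \<Rightarrow> 'a) set \<Rightarrow> ((int \<Rightarrow> 'a) \<Rightarrow> (int \<Rightarrow> 'a)) \<Rightarrow>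
   ((int \<Rightarrow> 'b) \<Rightarrow> (int \<Rightarrow> 'a)) \<Rightarrow> bool" where
  "flip_conjugacy B Y \<psi> A X \<phi> \<theta> \<longleftrightarrow>
     homeomorphic_map (shift_top B Y) (shift_top A X) \<theta>
     \<and> (\<forall>y\<in>Y. \<theta> (shift y) = shift (\<theta> y))
     \<and> (\<forall>y\<in>Y. \<theta> (\<psi> y) = \<phi> (\<theta> y))"

end

theory Submission
  imports Defs
begin

text \<open>Recode each point x of X by the sequence of pairs (x i, \<phi> x (-i)). The first
  coordinate recovers x, so this recoding is a conjugacy of shifts onto its image Y;
  and since \<phi> is an involution reversing the shift, on Y the flip \<phi> becomes the map
  that reverses the sequence and swaps the two entries of every pair, which is
  one-block. Continuity of the recoding and compactness make Y a shift space.\<close>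

lemma topspace_full_shift_top: "topspace (full_shift_top A) = {x. \<forall>i. x i \<in> A}"
  by (auto simp: full_shift_top_def PiE_UNIV_domain)

lemma topspace_shift_top:
  "S \<subseteq> topspace (full_shift_top A) \<Longrightarrow> topspace (shift_top A S) = S"
  unfolding shift_top_def by auto

lemma B1_subset_alphabet: "X \<subseteq> topspace (full_shift_top A) \<Longrightarrow> B1 X \<subseteq> A"
  by (auto simp: B1_def topspace_full_shift_top)

lemma compact_space_full_shift_top: "finite A \<Longrightarrow> compact_space (full_shift_top A)"
  unfolding full_shift_top_def
  by (simp add: compact_space_product_topology compact_space_discrete_topology)

lemma Hausdorff_space_full_shift_top: "Hausdorff_space (full_shift_top A)"
  by (simp add: full_shift_top_def Hausdorff_space_product_topology)

lemma continuous_map_shift_top_coordinate: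
  "continuous_map (shift_top A S) (discrete_topology A) (\<lambda>x. x i)"
  unfolding shift_top_def full_shift_top_def
  by (rule continuous_map_from_subtopology, rule continuous_map_product_projection) simp

lemma continuous_map_into_shift_top_iff:
  "continuous_map T (shift_top A S) f \<longleftrightarrow>
     (\<forall>i. continuous_map T (discrete_topology A) (\<lambda>z. f z i)) \<and> f ` topspace T \<subseteq> S"
  unfolding shift_top_def continuous_map_in_subtopology full_shift_top_def
    continuous_map_componentwise_UNIV by blast

lemma continuous_map_into_discrete_topology_subset:
  assumes "continuous_map T (discrete_topology U) f" "f ` topspace T \<subseteq> V" "V \<subseteq> U"
  shows "continuous_map T (discrete_topology V) f"
proof -
  have "continuous_map T (subtopology (discrete_topology U) V) f"
    unfolding continuous_map_in_subtopology using assms(1,2) by blast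
  then show ?thesis
    by (simp add: Int_absorb1[OF assms(3)])
qed

lemma continuous_map_block_code:
  assumes "f ` B \<subseteq> A" "block_code f ` Y \<subseteq> X"
  shows "continuous_map (shift_top B Y) (shift_top A X) (block_code f)"
proof -
  have "continuous_map (shift_top B Y) (discrete_topology A) (f \<circ> (\<lambda>y. y i))" for i
    using assms(1) by (intro continuous_map_compose[OF continuous_map_shift_top_coordinate]) auto
  moreover have "block_code f ` topspace (shift_top B Y) \<subseteq> X"
    using assms(2) by (auto simp: shift_top_def)
  ultimately show ?thesis
    by (simp add: continuous_map_into_shift_top_iff block_code_def o_def)
qed

lemma shift_space_image:
  assumes X: "shift_space A X" and "finite B"
    and h_cont: "continuous_map (shift_top A X) (full_shift_top B) h"
    and h_shift: "\<And>x. x \<in> X \<Longrightarrow> h (shift x) = shift (h x)"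
  shows "shift_space B (h ` X)"
proof -
  have "finite A" and X_top: "X \<subseteq> topspace (full_shift_top A)"
    and "closedin (full_shift_top A) X" and shift_X: "shift ` X = X"
    using X by (auto simp: shift_space_def)
  then have "compactin (shift_top A X) X"
    by (simp add: shift_top_def compactin_subtopology closedin_compact_space
        compact_space_full_shift_top)
  then have "compactin (full_shift_top B) (h ` X)"
    using image_compactin[OF _ h_cont] by blast
  then have "closedin (full_shift_top B) (h ` X)"
    by (simp add: compactin_imp_closedin Hausdorff_space_full_shift_top)
  moreover have "h ` X \<subseteq> topspace (full_shift_top B)"
    using continuous_map_image_subset_topspace[OF h_cont] topspace_shift_top[OF X_top] by simp
  moreover have "shift ` h ` X = h ` X"
    using h_shift shift_X by (metis (no_types, lifting) image_cong image_image)
  ultimately show ?thesis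
    using \<open>finite B\<close> by (simp add: shift_space_def)
qed

lemma homeomorphic_maps_shift_top_image:
  assumes X_top: "X \<subseteq> topspace (full_shift_top A)"
    and h_cont: "continuous_map (shift_top A X) (full_shift_top B) h"
    and g_cont: "continuous_map (shift_top B (h ` X)) (shift_top A X) g"
    and g_h: "\<And>x. x \<in> X \<Longrightarrow> g (h x) = x"
  shows "homeomorphic_maps (shift_top B (h ` X)) (shift_top A X) g h"
proof -
  have hX_top: "h ` X \<subseteq> topspace (full_shift_top B)"
    using continuous_map_image_subset_topspace[OF h_cont] topspace_shift_top[OF X_top] by simp
  have "continuous_map (shift_top A X) (shift_top B (h ` X)) h"
    using h_cont topspace_shift_top[OF X_top]
    by (simp add: shift_top_def continuous_map_in_subtopology)
  then show ?thesis
    using g_cont g_h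
    by (auto simp: homeomorphic_maps_def topspace_shift_top[OF hX_top] topspace_shift_top[OF X_top])
qed

lemma is_flip_transport:
  assumes maps: "homeomorphic_maps (shift_top B Y) (shift_top A X) \<theta> \<eta>"
    and Y_top: "Y \<subseteq> topspace (full_shift_top B)" and X_top: "X \<subseteq> topspace (full_shift_top A)"
    and flip: "is_flip A X \<phi>"
    and \<psi>_eq: "\<And>y. y \<in> Y \<Longrightarrow> \<psi> y = \<eta> (\<phi> (\<theta> y))"
    and \<psi>_shift: "\<And>y. y \<in> Y \<Longrightarrow> \<psi> (shift y) = shift_inv (\<psi> y)"
  shows "is_flip B Y \<psi>"
proof -
  note tops = topspace_shift_top[OF Y_top] topspace_shift_top[OF X_top]
  have \<phi>_hom: "homeomorphic_map (shift_top A X) (shift_top A X) \<phi>"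
    and \<phi>_inv: "\<And>x. x \<in> X \<Longrightarrow> \<phi> (\<phi> x) = x"
    using flip by (auto simp: is_flip_def)
  have \<phi>_X: "\<phi> x \<in> X" if "x \<in> X" for x
    using homeomorphic_imp_surjective_map[OF \<phi>_hom] tops that by blast
  have \<theta>_hom: "homeomorphic_map (shift_top B Y) (shift_top A X) \<theta>"
    and \<eta>_hom: "homeomorphic_map (shift_top A X) (shift_top B Y) \<eta>"
    and \<eta>\<theta>: "\<And>y. y \<in> Y \<Longrightarrow> \<eta> (\<theta> y) = y" and \<theta>\<eta>: "\<And>x. x \<in> X \<Longrightarrow> \<theta> (\<eta> x) = x"
    using maps tops by (auto simp: homeomorphic_maps_map)
  have \<theta>_X: "\<theta> y \<in> X" if "y \<in> Y" for y
    using homeomorphic_imp_surjective_map[OF \<theta>_hom] tops that by blast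
  have "homeomorphic_map (shift_top B Y) (shift_top B Y) (\<eta> \<circ> (\<phi> \<circ> \<theta>))"
    by (rule homeomorphic_map_compose[OF homeomorphic_map_compose[OF \<theta>_hom \<phi>_hom] \<eta>_hom])
  then have "homeomorphic_map (shift_top B Y) (shift_top B Y) \<psi>"
    by (rule homeomorphic_map_eq) (simp add: tops \<psi>_eq)
  moreover have "\<psi> (\<psi> y) = y" if "y \<in> Y" for y
  proof -
    have "\<eta> (\<phi> (\<theta> y)) \<in> Y"
      using homeomorphic_imp_surjective_map[OF \<eta>_hom] tops \<phi>_X \<theta>_X that by blast
    then show ?thesis
      using that by (simp add: \<psi>_eq \<theta>\<eta> \<phi>_X \<theta>_X \<phi>_inv \<eta>\<theta>)
  qed
  ultimately show ?thesis
    using \<psi>_shift by (simp add: is_flip_def)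
qed

lemma flip_conjugacy_transport:
  assumes maps: "homeomorphic_maps (shift_top B Y) (shift_top A X) \<theta> \<eta>"
    and Y_top: "Y \<subseteq> topspace (full_shift_top B)" and X_top: "X \<subseteq> topspace (full_shift_top A)"
    and \<phi>_X: "\<phi> ` X \<subseteq> X" and \<theta>_X: "\<theta> ` Y \<subseteq> X"
    and \<theta>_shift: "\<And>y. y \<in> Y \<Longrightarrow> \<theta> (shift y) = shift (\<theta> y)"
    and \<psi>_eq: "\<And>y. y \<in> Y \<Longrightarrow> \<psi> y = \<eta> (\<phi> (\<theta> y))"
  shows "flip_conjugacy B Y \<psi> A X \<phi> \<theta>"
proof -
  have "\<theta> (\<eta> x) = x" if "x \<in> X" for x
    using maps that topspace_shift_top[OF X_top] by (simp add: homeomorphic_maps_def)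
  then have "\<theta> (\<psi> y) = \<phi> (\<theta> y)" if "y \<in> Y" for y
    using that \<phi>_X \<theta>_X by (simp add: \<psi>_eq image_subset_iff)
  then show ?thesis
    using maps \<theta>_shift by (simp add: flip_conjugacy_def homeomorphic_maps_imp_map)
qed

definition flip_code :: "('b \<Rightarrow> 'b) \<Rightarrow> (int \<Rightarrow> 'b) \<Rightarrow> (int \<Rightarrow> 'b)" where
  "flip_code \<tau> y = (\<lambda>i. \<tau> (y (- i)))"

definition flip_pair_code :: "((int \<Rightarrow> 'a) \<Rightarrow> (int \<Rightarrow> 'a)) \<Rightarrow> (int \<Rightarrow> 'a) \<Rightarrow> (int \<Rightarrow> 'a \<times> 'a)" where
  "flip_pair_code \<phi> x = (\<lambda>i. (x i, \<phi> x (- i)))"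

lemma flip_code_shift: "flip_code \<tau> (shift y) = shift_inv (flip_code \<tau> y)"
  by (simp add: flip_code_def shift_def shift_inv_def algebra_simps)

lemma block_code_shift: "block_code f (shift y) = shift (block_code f y)"
  by (simp add: block_code_def shift_def)

lemma flip_pair_code_shift:
  assumes "\<phi> (shift x) = shift_inv (\<phi> x)"
  shows "flip_pair_code \<phi> (shift x) = shift (flip_pair_code \<phi> x)"
  using assms by (simp add: flip_pair_code_def shift_def shift_inv_def algebra_simps)

lemma flip_code_swap_flip_pair_code:
  assumes "\<phi> (\<phi> x) = x"
  shows "flip_code prod.swap (flip_pair_code \<phi> x) = flip_pair_code \<phi> (\<phi> x)"
  using assms by (simp add: flip_code_def flip_pair_code_def)

lemma flip_pair_code_in_B1:
  assumes "x \<in> X" "\<phi> x \<in> X"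
  shows "flip_pair_code \<phi> x i \<in> B1 X \<times> B1 X"
  using assms by (auto simp: flip_pair_code_def B1_def)

lemma continuous_map_flip_pair_code:
  assumes \<phi>_cont: "continuous_map (shift_top A X) (shift_top A X) \<phi>"
    and X_top: "X \<subseteq> topspace (full_shift_top A)"
    and \<phi>_X: "\<phi> ` X \<subseteq> X"
  shows "continuous_map (shift_top A X) (discrete_topology (B1 X \<times> B1 X))
           (\<lambda>x. flip_pair_code \<phi> x i)"
proof (rule continuous_map_into_discrete_topology_subset)
  show "continuous_map (shift_top A X) (discrete_topology (A \<times> A)) (\<lambda>x. flip_pair_code \<phi> x i)"
  proof -
    have "continuous_map (shift_top A X) (prod_topology (discrete_topology A) (discrete_topology A))
            (\<lambda>x. (x i, \<phi> x (- i)))"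
      by (intro continuous_map_pairedI continuous_map_shift_top_coordinate
          continuous_map_compose[OF \<phi>_cont continuous_map_shift_top_coordinate, unfolded o_def])
    then show ?thesis
      by (simp only: flip_pair_code_def prod_topology_discrete_topology)
  qed
  show "(\<lambda>x. flip_pair_code \<phi> x i) ` topspace (shift_top A X) \<subseteq> B1 X \<times> B1 X"
    using flip_pair_code_in_B1 \<phi>_X topspace_shift_top[OF X_top] by blast
  show "B1 X \<times> B1 X \<subseteq> A \<times> A"
    using B1_subset_alphabet[OF X_top] by blast
qed

lemma continuous_map_recoding:
  assumes \<phi>_cont: "continuous_map (shift_top A X) (shift_top A X) \<phi>"
    and X_top: "X \<subseteq> topspace (full_shift_top A)" and \<phi>_X: "\<phi> ` X \<subseteq> X"
  shows "continuous_map (shift_top A X) (full_shift_top (e ` (B1 X \<times> B1 X)))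
           (block_code e \<circ> flip_pair_code \<phi>)"
proof -
  have "continuous_map (shift_top A X) (discrete_topology (e ` (B1 X \<times> B1 X)))
          (e \<circ> (\<lambda>x. flip_pair_code \<phi> x i))" for i
    by (intro continuous_map_compose[OF continuous_map_flip_pair_code[OF assms]]) auto
  then show ?thesis
    by (simp add: full_shift_top_def continuous_map_componentwise_UNIV block_code_def o_def)
qed

lemma inv_into_recoding:
  assumes "inj_on e (B1 X \<times> B1 X)" "x \<in> X" "\<phi> x \<in> X"
  shows "inv_into (B1 X \<times> B1 X) e (block_code e (flip_pair_code \<phi> x) i) = flip_pair_code \<phi> x i"
  using assms by (simp add: block_code_def flip_pair_code_in_B1)

lemma one_block_flip_recoding:
  fixes e :: "'a \<times> 'a \<Rightarrow> 'b"
  assumes X: "shift_space A X" and flip: "is_flip A X \<phi>"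
    and e_inj: "inj_on e (B1 X \<times> B1 X)"
  shows "\<exists>(\<A>::'b set) (\<Phi>::'b \<Rightarrow> 'a) Y \<psi>.
           finite \<A> \<and> \<Phi> ` \<A> \<subseteq> B1 X \<and> shift_space \<A> Y \<and> one_block_flip \<A> Y \<psi>
           \<and> flip_conjugacy \<A> Y \<psi> A X \<phi> (block_code \<Phi>)"
proof -
  define C where "C = B1 X \<times> B1 X"
  define \<A> where "\<A> = e ` C"
  define \<Phi> where "\<Phi> = fst \<circ> inv_into C e"
  define \<tau> where "\<tau> = e \<circ> prod.swap \<circ> inv_into C e"
  define h where "h = block_code e \<circ> flip_pair_code \<phi>"
  have "finite A" and X_top: "X \<subseteq> topspace (full_shift_top A)"
    using X by (auto simp: shift_space_def)
  have \<phi>_hom: "homeomorphic_map (shift_top A X) (shift_top A X) \<phi>"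
    and \<phi>_shift: "\<And>x. x \<in> X \<Longrightarrow> \<phi> (shift x) = shift_inv (\<phi> x)"
    and \<phi>_inv: "\<And>x. x \<in> X \<Longrightarrow> \<phi> (\<phi> x) = x"
    using flip by (auto simp: is_flip_def)
  have \<phi>_X: "\<phi> ` X \<subseteq> X"
    using homeomorphic_imp_surjective_map[OF \<phi>_hom] topspace_shift_top[OF X_top] by blast
  have B1_A: "B1 X \<subseteq> A"
    using X_top by (rule B1_subset_alphabet)
  have decode: "inv_into C e (h x i) = flip_pair_code \<phi> x i" if "x \<in> X" for x i
    using inv_into_recoding[OF e_inj that] \<phi>_X that by (auto simp: h_def C_def)
  have h_inv: "block_code \<Phi> (h x) = x" if "x \<in> X" for x
    using decode[OF that] by (simp add: block_code_def \<Phi>_def flip_pair_code_def)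
  have h_shift: "h (shift x) = shift (h x)" if "x \<in> X" for x
    by (simp add: h_def flip_pair_code_shift \<phi>_shift that block_code_shift)
  have h_flip: "flip_code \<tau> (h x) = h (\<phi> x)" if "x \<in> X" for x
  proof -
    have "flip_code \<tau> (h x) = block_code e (flip_code prod.swap (flip_pair_code \<phi> x))"
      using decode[OF that] by (simp add: flip_code_def block_code_def \<tau>_def)
    then show ?thesis
      by (simp add: flip_code_swap_flip_pair_code \<phi>_inv that h_def)
  qed
  have h_cont: "continuous_map (shift_top A X) (full_shift_top \<A>) h"
    unfolding h_def \<A>_def C_def
    by (rule continuous_map_recoding[OF homeomorphic_imp_continuous_map[OF \<phi>_hom] X_top \<phi>_X])
  have Y: "shift_space \<A> (h ` X)"
    using shift_space_image[OF X _ h_cont h_shift] \<open>finite A\<close> B1_A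
    by (simp add: \<A>_def C_def finite_subset)
  then have Y_top: "h ` X \<subseteq> topspace (full_shift_top \<A>)"
    by (simp add: shift_space_def)
  have \<Phi>_\<A>: "\<Phi> ` \<A> \<subseteq> B1 X"
    using e_inj by (auto simp: \<A>_def \<Phi>_def C_def)
  have maps: "homeomorphic_maps (shift_top \<A> (h ` X)) (shift_top A X) (block_code \<Phi>) h"
    using \<Phi>_\<A> B1_A h_inv
    by (intro homeomorphic_maps_shift_top_image[OF X_top h_cont] continuous_map_block_code) auto
  have \<psi>_eq: "flip_code \<tau> y = h (\<phi> (block_code \<Phi> y))" if "y \<in> h ` X" for y
    using that h_flip h_inv by auto
  have "is_flip \<A> (h ` X) (flip_code \<tau>)"
  proof (rule is_flip_transport[OF maps Y_top X_top flip])
    show "flip_code \<tau> y = h (\<phi> (block_code \<Phi> y))" if "y \<in> h ` X" for y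
      using that by (rule \<psi>_eq)
  qed (rule flip_code_shift)
  then have "one_block_flip \<A> (h ` X) (flip_code \<tau>)"
    by (simp add: one_block_flip_def flip_code_def)
  moreover have "flip_conjugacy \<A> (h ` X) (flip_code \<tau>) A X \<phi> (block_code \<Phi>)"
  proof (rule flip_conjugacy_transport[OF maps Y_top X_top \<phi>_X])
    show "block_code \<Phi> ` h ` X \<subseteq> X"
      using h_inv by auto
    show "flip_code \<tau> y = h (\<phi> (block_code \<Phi> y))" if "y \<in> h ` X" for y
      using that by (rule \<psi>_eq)
  qed (rule block_code_shift)
  moreover have "finite \<A>"
    using Y by (simp add: shift_space_def)
  ultimately show ?thesis
    using Y \<Phi>_\<A> by blast
qed

theorem lemma3p1:
  fixes A :: "'a set" and X :: "(int \<Rightarrow> 'a) set" and \<phi> :: "(int \<Rightarrow> 'a) \<Rightarrow> (int \<Rightarrow> 'a)"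
  assumes "shift_space A X" and "is_flip A X \<phi>"
  shows "\<exists>(\<A>::nat set) (\<Phi>::nat \<Rightarrow> 'a) Y \<psi>.
           finite \<A> \<and> \<Phi> ` \<A> \<subseteq> B1 X \<and> shift_space \<A> Y \<and> one_block_flip \<A> Y \<psi>
           \<and> flip_conjugacy \<A> Y \<psi> A X \<phi> (block_code \<Phi>)"
proof -
  have "finite A" and "X \<subseteq> topspace (full_shift_top A)"
    using assms(1) by (auto simp: shift_space_def)
  then have "finite (B1 X)"
    by (metis (no_types, lifting) finite_subset B1_subset_alphabet)
  then have "inj_on (to_nat_on (B1 X \<times> B1 X)) (B1 X \<times> B1 X)"
    by (simp add: inj_on_to_nat_on countable_finite)
  then show ?thesis
    by (rule one_block_flip_recoding[OF assms])
qed

end
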